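(* Let $q$ be a prime power not divisible by $2$ or $3$, and let $\lambda\in\mathbb{F}_q^\times$ with $27\lambda\ne1$. Let $E_\lambda$ be the projective closure of the curve $y^2+xy+y=\lambda x^3$ (the affine curve together with its point at infinity). Then $|E_\lambda(\mathbb{F}_q)|=q+1-H_q(27\lambda)$, where $H_q$ is the hypergeometric sum with $\boldsymbol\alpha=(1/3,2/3)$, $\boldsymbol\beta=(1,1)$.
   Context: Fix a nontrivial additive character $\psi_q$ of $\mathbb{F}_q$, a generator $\omega$ of the character group of $\mathbb{F}_q^\times$, and $g(m)=\sum_{x\in\mathbb{F}_q^\times}\omega(x)^m\psi_q(x)$. Here, with $(p_1)=(3)$ and $(q_1,q_2,q_3)=(1,1,1)$, $H_q$ is defined for $t\in\mathbb{F}_q^\times$ by $$H_q(t)=\frac{(-1)^{4}}{1-q}\sum_{m=0}^{q-2}q^{s(m)-1}g(3m)g(-m)^3\,\omega(-t/27)^m,$$ where $s(m)=1$ if $m\equiv0\pmod{q-1}$ and $s(m)=0$ otherwise. *)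

theory Defs
  imports Complex_Main
begin

text \<open>The finite field F_q is modelled by a finite field type 'a, with q = card (UNIV :: 'a set).\<close>

definition additive_char :: "('a::{finite,field} \<Rightarrow> complex) \<Rightarrow> bool" where
  "additive_char \<psi> \<longleftrightarrow> (\<forall>x y. \<psi> (x + y) = \<psi> x * \<psi> y) \<and> \<psi> 0 = 1"

definition nontrivial_additive_char :: "('a::{finite,field} \<Rightarrow> complex) \<Rightarrow> bool" where
  "nontrivial_additive_char \<psi> \<longleftrightarrow> additive_char \<psi> \<and> (\<exists>x. \<psi> x \<noteq> 1)"

definition mult_char :: "('a::{finite,field} \<Rightarrow> complex) \<Rightarrow> bool" where
  "mult_char \<omega> \<longleftrightarrow> (\<forall>x y. x \<noteq> 0 \<longrightarrow> y \<noteq> 0 \<longrightarrow> \<omega> (x * y) = \<omega> x * \<omega> y)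
                   \<and> (\<forall>x. x \<noteq> 0 \<longrightarrow> \<omega> x \<noteq> 0)"

text \<open>A generator of the (cyclic) character group of F_q^x: its order is exactly q - 1.\<close>
definition char_generator :: "('a::{finite,field} \<Rightarrow> complex) \<Rightarrow> bool" where
  "char_generator \<omega> \<longleftrightarrow> mult_char \<omega> \<and>
     (\<forall>k::nat. (\<forall>x::'a. x \<noteq> 0 \<longrightarrow> \<omega> x ^ k = 1) \<longleftrightarrow> (card (UNIV :: 'a set) - 1) dvd k)"

definition gauss_sum :: "('a::{finite,field} \<Rightarrow> complex) \<Rightarrow> ('a \<Rightarrow> complex) \<Rightarrow> int \<Rightarrow> complex" where
  "gauss_sum \<psi> \<omega> m = (\<Sum>x\<in>{x::'a. x \<noteq> 0}. (\<omega> x) powi m * \<psi> x)"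

definition s_fun :: "nat \<Rightarrow> int \<Rightarrow> int" where
  "s_fun q m = (if m mod (int q - 1) = 0 then 1 else 0)"

text \<open>H_q(t) for alpha = (1/3,2/3), beta = (1,1), i.e. (p_1) = (3), (q_1,q_2,q_3) = (1,1,1).\<close>
definition H_q :: "('a::{finite,field} \<Rightarrow> complex) \<Rightarrow> ('a \<Rightarrow> complex) \<Rightarrow> 'a \<Rightarrow> complex" where
  "H_q \<psi> \<omega> t =
     (let q = card (UNIV :: 'a set) in
      ((-1) ^ 4 / (1 - of_nat q)) *
      (\<Sum>m = 0..int q - 2.
         (of_nat q) powi (s_fun q m - 1) * gauss_sum \<psi> \<omega> (3 * m) * (gauss_sum \<psi> \<omega> (- m)) ^ 3
         * (\<omega> (- t / 27)) powi m))"

text \<open>Number of F_q-points of the projective closure of y^2 + xy + y = lambda x^3: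
  the affine solutions plus the single point at infinity.\<close>
definition E_card :: "'a::{finite,field} \<Rightarrow> nat" where
  "E_card lam = card {p :: 'a \<times> 'a. snd p ^ 2 + fst p * snd p + snd p = lam * fst p ^ 3} + 1"

end

theory Submission
  imports Defs "HOL-Number_Theory.Residues"
begin

(* Substituting b \<mapsto> a b in g(-m) turns g(3m) g(-m)^3 \<omega>(-\<lambda>)^m into a sum over
   (a, b, c, d) \<in> (F_q^x)^4 of \<omega>(-\<lambda>/(bcd))^m \<psi>(a (1 + b + c + d)).  Summing over m picks out
   bcd = -\<lambda> by orthogonality of characters, and the sum over a detects 1 + b + c + d = 0; so the
   sum of these terms over m is (q - 1)(q N - (q - 1)^2), where N is the number of points of
   b c (1 + b + c) = \<lambda> on the torus.  The substitution (x, y) = (1/c, b/c) identifies these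
   with the affine points of E_\<lambda> having x \<noteq> 0; the affine points (0, 0), (0, -1) and the point
   at infinity give |E_\<lambda>(F_q)| = N + 3, while unwinding the weights q^(s(m)-1)/(1-q) in H_q
   gives H_q(27\<lambda>) = q - 2 - N. *)

lemma sum_nonzero_eq_sum_UNIV_minus:
  fixes f :: "'a::{finite,zero} \<Rightarrow> 'b::ab_group_add"
  shows "(\<Sum>x\<in>{x. x \<noteq> 0}. f x) = (\<Sum>x\<in>UNIV. f x) - f 0"
proof -
  have "{x::'a. x \<noteq> 0} = UNIV - {0}" by auto
  then show ?thesis by (simp add: sum_diff1)
qed

lemma card_nonzero: "card {x::'a::{finite,zero}. x \<noteq> 0} = card (UNIV :: 'a set) - 1"
proof -
  have "{x::'a. x \<noteq> 0} = UNIV - {0}" by auto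
  then show ?thesis by (simp add: card_Diff_singleton)
qed

lemma additive_char_sum_mult:
  fixes \<psi> :: "'a::{finite,field} \<Rightarrow> complex"
  assumes "nontrivial_additive_char \<psi>"
  shows "(\<Sum>a\<in>UNIV. \<psi> (a * z)) = (if z = 0 then of_nat (card (UNIV :: 'a set)) else 0)"
proof (cases "z = 0")
  case True
  with assms show ?thesis by (simp add: nontrivial_additive_char_def additive_char_def)
next
  case False
  from assms obtain x0 where x0: "\<psi> x0 \<noteq> 1" and add: "additive_char \<psi>"
    unfolding nontrivial_additive_char_def by blast
  have "(\<Sum>x\<in>UNIV. \<psi> x) = (\<Sum>x\<in>UNIV. \<psi> (x + x0))"
    by (rule sum.reindex_bij_witness[where i="\<lambda>x. x + x0" and j="\<lambda>x. x - x0"]) auto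
  also have "\<dots> = \<psi> x0 * (\<Sum>x\<in>UNIV. \<psi> x)"
    using add by (simp add: additive_char_def sum_distrib_left mult.commute)
  finally have "(\<Sum>x\<in>UNIV. \<psi> x) = 0"
    using x0 by (metis mult_cancel_right1)
  moreover have "(\<Sum>a\<in>UNIV. \<psi> (a * z)) = (\<Sum>x\<in>UNIV. \<psi> x)"
    by (rule sum.reindex_bij_witness[where i="\<lambda>x. x / z" and j="\<lambda>a. a * z"]) (use False in auto)
  ultimately show ?thesis using False by simp
qed

lemma additive_char_sum_nonzero_mult:
  fixes \<psi> :: "'a::{finite,field} \<Rightarrow> complex"
  assumes "nontrivial_additive_char \<psi>"
  shows "(\<Sum>a\<in>{a. a \<noteq> 0}. \<psi> (a * z)) = (if z = 0 then of_nat (card (UNIV :: 'a set)) else 0) - 1"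
  using assms by (simp add: sum_nonzero_eq_sum_UNIV_minus additive_char_sum_mult
      nontrivial_additive_char_def additive_char_def)

lemma gauss_sum_0:
  assumes "nontrivial_additive_char \<psi>"
  shows "gauss_sum \<psi> \<omega> 0 = -1"
  using additive_char_sum_nonzero_mult[OF assms, of 1] by (simp add: gauss_sum_def)

lemma mult_char_one: "mult_char \<omega> \<Longrightarrow> \<omega> 1 = 1"
  unfolding mult_char_def by (metis mult_cancel_right1 one_neq_zero mult_1)

lemma power_card_eq_1_if_mult_closed:
  fixes I :: "'b::field set"
  assumes "finite I" "0 \<notin> I" "\<And>u v. u \<in> I \<Longrightarrow> v \<in> I \<Longrightarrow> u * v \<in> I" "w \<in> I"
  shows "w ^ card I = 1"
proof -
  have inj: "inj_on ((*) w) I" using assms(2,4) by (auto simp: inj_on_def)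
  have "(*) w ` I = I"
    using assms(3,4) card_image[OF inj] by (intro card_subset_eq[OF assms(1)]) auto
  then have "\<Prod>I = (\<Prod>u\<in>I. w * u)" using prod.reindex[OF inj, of id] by simp
  also have "\<dots> = w ^ card I * \<Prod>I" by (simp add: prod.distrib)
  finally show ?thesis using assms(1,2) by (metis mult_cancel_right1 prod_zero_iff)
qed

lemma char_generator_eq_1_iff:
  assumes gen: "char_generator \<omega>" and "x \<noteq> 0"
  shows "\<omega> x = 1 \<longleftrightarrow> x = 1"
proof
  assume "\<omega> x = 1"
  define F where "F = {x::'a. x \<noteq> 0}"
  have mult: "mult_char \<omega>" using gen by (simp add: char_generator_def)
  have closed: "u * v \<in> \<omega> ` F" if "u \<in> \<omega> ` F" "v \<in> \<omega> ` F" for u v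
  proof -
    from that obtain a b where "a \<in> F" "b \<in> F" "u = \<omega> a" "v = \<omega> b" by auto
    with mult show ?thesis by (auto simp: F_def mult_char_def intro!: image_eqI[of _ _ "a * b"])
  qed
  have "0 \<notin> \<omega> ` F" using mult by (auto simp: F_def mult_char_def)
  then have "\<forall>y. y \<noteq> 0 \<longrightarrow> \<omega> y ^ card (\<omega> ` F) = 1"
    using power_card_eq_1_if_mult_closed[OF _ _ closed] by (auto simp: F_def)
  \<comment> \<open>so the image of \<omega> has order q - 1, i.e. \<omega> is injective on F_q^x\<close>
  then have "card (UNIV :: 'a set) - 1 dvd card (\<omega> ` F)"
    using gen by (simp add: char_generator_def)
  moreover have "card (\<omega> ` F) \<le> card F" "card (\<omega> ` F) > 0"
    by (auto simp: card_image_le F_def card_gt_0_iff intro: exI[of _ 1])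
  ultimately have "card (\<omega> ` F) = card F"
    using card_nonzero[where 'a='a] by (metis F_def dvd_imp_le le_antisym)
  then have "inj_on \<omega> F" by (simp add: eq_card_imp_inj_on)
  then show "x = 1"
    using \<open>\<omega> x = 1\<close> \<open>x \<noteq> 0\<close> mult_char_one[OF mult] by (auto simp: F_def inj_on_def)
qed (use gen mult_char_one in \<open>auto simp: char_generator_def\<close>)

lemma char_generator_orthogonality:
  fixes \<omega> :: "'a::{finite,field} \<Rightarrow> complex"
  assumes "char_generator \<omega>" and "z \<noteq> 0"
  shows "(\<Sum>m<card (UNIV :: 'a set) - 1. \<omega> z ^ m)
       = (if z = 1 then of_nat (card (UNIV :: 'a set) - 1) else 0)"
proof (cases "z = 1")
  case True
  with assms show ?thesis by (simp add: char_generator_def mult_char_one)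
next
  case False
  have "\<omega> z ^ (card (UNIV :: 'a set) - 1) = 1"
    using assms(1)[unfolded char_generator_def, THEN conjunct2, rule_format, of "card (UNIV :: 'a set) - 1"]
      assms(2) by simp
  with False assms show ?thesis
    by (simp add: geometric_sum char_generator_eq_1_iff)
qed

lemma mult_char_divide:
  assumes "mult_char \<omega>" "x \<noteq> 0" "y \<noteq> 0"
  shows "\<omega> (x / y) = \<omega> x / \<omega> y"
proof -
  have "\<omega> x = \<omega> (x / y) * \<omega> y"
    using assms mult_char_def[of \<omega>] by (metis divide_eq_0_iff nonzero_divide_eq_eq)
  with assms show ?thesis by (simp add: mult_char_def)
qed

lemma gauss_sum_dilate:
  fixes \<psi> \<omega> :: "'a::{finite,field} \<Rightarrow> complex"
  assumes "mult_char \<omega>" "a \<noteq> 0"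
  shows "gauss_sum \<psi> \<omega> k = \<omega> a powi k * (\<Sum>b\<in>{b. b \<noteq> 0}. \<omega> b powi k * \<psi> (a * b))"
proof -
  have "gauss_sum \<psi> \<omega> k = (\<Sum>b\<in>{b. b \<noteq> 0}. \<omega> (a * b) powi k * \<psi> (a * b))"
    unfolding gauss_sum_def
    by (rule sum.reindex_bij_witness[where i="\<lambda>b. a * b" and j="\<lambda>x. x / a"]) (use assms(2) in auto)
  also have "\<dots> = \<omega> a powi k * (\<Sum>b\<in>{b. b \<noteq> 0}. \<omega> b powi k * \<psi> (a * b))"
    using assms by (simp add: mult_char_def power_int_mult_distrib sum_distrib_left mult.assoc)
  finally show ?thesis .
qed

lemma sum_cube_cartesian:
  fixes f :: "'b \<Rightarrow> 'c::comm_semiring_1"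
  shows "(\<Sum>x\<in>A. f x) ^ 3 = (\<Sum>(x, y, z)\<in>A \<times> A \<times> A. f x * f y * f z)"
proof -
  have "(\<Sum>x\<in>A. f x) ^ 3 = (\<Sum>x\<in>A. \<Sum>y\<in>A. \<Sum>z\<in>A. f x * (f y * f z))"
    unfolding power3_eq_cube mult.assoc sum_distrib_right unfolding sum_distrib_left ..
  then show ?thesis by (simp add: sum.cartesian_product mult.assoc)
qed

lemma gauss_sum_cube_expansion:
  fixes \<psi> \<omega> :: "'a::{finite,field} \<Rightarrow> complex"
  assumes \<omega>: "mult_char \<omega>" and \<psi>: "additive_char \<psi>" and "u \<noteq> 0"
  shows "gauss_sum \<psi> \<omega> (3 * k) * gauss_sum \<psi> \<omega> (- k) ^ 3 * \<omega> u powi k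
       = (\<Sum>(b, c, d)\<in>{x. x \<noteq> 0} \<times> {x. x \<noteq> 0} \<times> {x. x \<noteq> 0}.
            \<omega> (u / (b * c * d)) powi k * (\<Sum>a\<in>{x. x \<noteq> 0}. \<psi> (a * (1 + b + c + d))))"
    (is "_ = (\<Sum>(b, c, d)\<in>?T. _)")
proof -
  define F where "F = {x::'a. x \<noteq> 0}"
  have summand: "\<psi> a * ((\<omega> b powi (- k) * \<psi> (a * b)) * (\<omega> c powi (- k) * \<psi> (a * c))
                * (\<omega> d powi (- k) * \<psi> (a * d))) * \<omega> u powi k
            = \<omega> (u / (b * c * d)) powi k * \<psi> (a * (1 + b + c + d))"
    if "b \<noteq> 0" "c \<noteq> 0" "d \<noteq> 0" for a b c d
  proof -
    have "\<psi> (a * (1 + b + c + d)) = \<psi> a * \<psi> (a * b) * \<psi> (a * c) * \<psi> (a * d)"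
      using \<psi> by (simp add: additive_char_def distrib_left)
    moreover have "\<omega> (u / (b * c * d)) = \<omega> u / (\<omega> b * \<omega> c * \<omega> d)"
      using that \<open>u \<noteq> 0\<close> \<omega> by (simp add: mult_char_divide mult_char_def)
    ultimately show ?thesis
      by (simp add: power_int_minus power_int_divide_distrib power_int_mult_distrib field_simps)
  qed
  have "gauss_sum \<psi> \<omega> (3 * k) * gauss_sum \<psi> \<omega> (- k) ^ 3 * \<omega> u powi k
      = (\<Sum>a\<in>F. \<psi> a * (\<Sum>b\<in>F. \<omega> b powi (- k) * \<psi> (a * b)) ^ 3 * \<omega> u powi k)"
    unfolding gauss_sum_def[of \<psi> \<omega> "3 * k"] sum_distrib_right F_def
  proof (rule sum.cong)
    fix a :: 'a assume "a \<in> {x. x \<noteq> 0}"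
    then have "a \<noteq> 0" by simp
    have "\<omega> a powi (3 * k) = (\<omega> a powi k) ^ 3"
      using power_int_power'[of "\<omega> a" k 3] by (simp add: mult.commute)
    with \<open>a \<noteq> 0\<close> have "\<omega> a powi (3 * k) * (\<omega> a powi (- k)) ^ 3 = 1"
      using \<omega> by (simp add: mult_char_def power_int_minus power_inverse)
    then show "\<omega> a powi (3 * k) * \<psi> a * gauss_sum \<psi> \<omega> (- k) ^ 3 * \<omega> u powi k
        = \<psi> a * (\<Sum>b\<in>{x. x \<noteq> 0}. \<omega> b powi (- k) * \<psi> (a * b)) ^ 3 * \<omega> u powi k"
      unfolding gauss_sum_dilate[OF \<omega> \<open>a \<noteq> 0\<close>, of \<psi> "- k"] power_mult_distrib
      by (simp add: mult_ac)
  qed simp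
  also have "\<dots> = (\<Sum>a\<in>F. \<Sum>(b, c, d)\<in>?T. \<omega> (u / (b * c * d)) powi k * \<psi> (a * (1 + b + c + d)))"
    unfolding sum_cube_cartesian sum_distrib_left sum_distrib_right F_def
    by (intro sum.cong refl) (auto simp: summand)
  also have "\<dots> = (\<Sum>(b, c, d)\<in>?T. \<omega> (u / (b * c * d)) powi k * (\<Sum>a\<in>F. \<psi> (a * (1 + b + c + d))))"
    by (subst sum.swap) (simp add: sum_distrib_left case_prod_beta)
  finally show ?thesis unfolding F_def .
qed

lemma sum_norm_fibre:
  fixes f :: "'a::{finite,field} \<Rightarrow> 'a \<Rightarrow> 'a \<Rightarrow> 'b::comm_monoid_add"
  assumes "u \<noteq> 0"
  shows "(\<Sum>(b, c, d)\<in>{x. x \<noteq> 0} \<times> {x. x \<noteq> 0} \<times> {x. x \<noteq> 0}. if b * c * d = u then f b c d else 0)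
       = (\<Sum>(b, c)\<in>{x. x \<noteq> 0} \<times> {x. x \<noteq> 0}. f b c (u / (b * c)))"
proof -
  have "(\<Sum>(b, c, d)\<in>{x. x \<noteq> 0} \<times> {x. x \<noteq> 0} \<times> {x. x \<noteq> 0}. if b * c * d = u then f b c d else 0)
      = (\<Sum>(b, c, d)\<in>{(b, c, d). b \<noteq> 0 \<and> c \<noteq> 0 \<and> b * c * d = u}. f b c d)"
    using assms by (intro sum.mono_neutral_cong_right) (auto split: if_splits)
  also have "\<dots> = (\<Sum>(b, c)\<in>{x. x \<noteq> 0} \<times> {x. x \<noteq> 0}. f b c (u / (b * c)))"
    by (rule sum.reindex_bij_witness[where i="\<lambda>(b, c). (b, c, u / (b * c))" and j="\<lambda>(b, c, d). (b, c)"])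
      (use assms in \<open>auto simp: field_simps\<close>)
  finally show ?thesis .
qed

(* With d = -\<lambda>/(bc) these are the solutions of 1 + b + c + d = 0, b c d = -\<lambda> in (F_q^x)^3. *)
definition torus_curve_points :: "'a::field \<Rightarrow> ('a \<times> 'a) set" where
  "torus_curve_points lam = {(b, c). b \<noteq> 0 \<and> c \<noteq> 0 \<and> b * c * (1 + b + c) = lam}"

lemma gauss_moment_sum:
  fixes \<psi> \<omega> :: "'a::{finite,field} \<Rightarrow> complex"
  assumes \<omega>: "char_generator \<omega>" and \<psi>: "nontrivial_additive_char \<psi>" and "lam \<noteq> 0"
  shows "(\<Sum>m<card (UNIV :: 'a set) - 1.
            gauss_sum \<psi> \<omega> (3 * int m) * gauss_sum \<psi> \<omega> (- int m) ^ 3 * \<omega> (- lam) ^ m)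
       = of_nat (card (UNIV :: 'a set) - 1) *
         (of_nat (card (UNIV :: 'a set)) * of_nat (card (torus_curve_points lam))
          - of_nat (card (UNIV :: 'a set) - 1) ^ 2)"
proof -
  define F where "F = {x::'a. x \<noteq> 0}"
  define G where "G z = (if z = 0 then of_nat (card (UNIV :: 'a set)) else 0) - (1 :: complex)" for z :: 'a
  have mult: "mult_char \<omega>" and add: "additive_char \<psi>"
    using \<omega> \<psi> by (simp_all add: char_generator_def nontrivial_additive_char_def)
  have "(\<Sum>m<card (UNIV :: 'a set) - 1. gauss_sum \<psi> \<omega> (3 * int m) * gauss_sum \<psi> \<omega> (- int m) ^ 3 * \<omega> (- lam) ^ m)
      = (\<Sum>m<card (UNIV :: 'a set) - 1. \<Sum>(b, c, d)\<in>F \<times> F \<times> F. \<omega> (- lam / (b * c * d)) ^ m * G (1 + b + c + d))"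
  proof (rule sum.cong[OF refl])
    fix m :: nat
    show "gauss_sum \<psi> \<omega> (3 * int m) * gauss_sum \<psi> \<omega> (- int m) ^ 3 * \<omega> (- lam) ^ m
        = (\<Sum>(b, c, d)\<in>F \<times> F \<times> F. \<omega> (- lam / (b * c * d)) ^ m * G (1 + b + c + d))"
      using gauss_sum_cube_expansion[OF mult add, of "- lam" "int m"] \<open>lam \<noteq> 0\<close>
      by (simp add: additive_char_sum_nonzero_mult[OF \<psi>] F_def G_def mult.commute)
  qed
  also have "\<dots> = (\<Sum>(b, c, d)\<in>F \<times> F \<times> F.
      (\<Sum>m<card (UNIV :: 'a set) - 1. \<omega> (- lam / (b * c * d)) ^ m) * G (1 + b + c + d))"
    by (subst sum.swap) (simp add: case_prod_beta sum_distrib_right)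
  also have "\<dots> = (\<Sum>(b, c, d)\<in>F \<times> F \<times> F.
      if b * c * d = - lam then of_nat (card (UNIV :: 'a set) - 1) * G (1 + b + c + d) else 0)"
  proof -
    have "(\<Sum>m<card (UNIV :: 'a set) - 1. \<omega> (- lam / (b * c * d)) ^ m)
        = (if b * c * d = - lam then of_nat (card (UNIV :: 'a set) - 1) else 0)"
      if "b \<in> F" "c \<in> F" "d \<in> F" for b c d
      using that \<open>lam \<noteq> 0\<close> char_generator_orthogonality[OF \<omega>, of "- lam / (b * c * d)"]
      by (auto simp: F_def field_simps)
    then show ?thesis by (intro sum.cong refl) auto
  qed
  also have "\<dots> = of_nat (card (UNIV :: 'a set) - 1) * (\<Sum>(b, c)\<in>F \<times> F. G (1 + b + c - lam / (b * c)))"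
    using sum_norm_fibre[of "- lam" "\<lambda>b c d. of_nat (card (UNIV :: 'a set) - 1) * G (1 + b + c + d)"]
      \<open>lam \<noteq> 0\<close>
    by (simp add: F_def sum_distrib_left case_prod_beta)
  also have "(\<Sum>(b, c)\<in>F \<times> F. G (1 + b + c - lam / (b * c)))
      = of_nat (card (UNIV :: 'a set)) * of_nat (card (torus_curve_points lam)) - of_nat (card (UNIV :: 'a set) - 1) ^ 2"
  proof -
    have "1 + b + c - lam / (b * c) = 0 \<longleftrightarrow> (b, c) \<in> torus_curve_points lam"
      if "b \<noteq> 0" "c \<noteq> 0" for b c :: 'a
      using that by (auto simp: torus_curve_points_def field_simps)
    then have "(\<Sum>(b, c)\<in>F \<times> F. G (1 + b + c - lam / (b * c)))
        = (\<Sum>p\<in>F \<times> F. (if p \<in> torus_curve_points lam then of_nat (card (UNIV :: 'a set)) else 0) - 1)"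
      by (intro sum.cong) (auto simp: F_def G_def)
    moreover have "torus_curve_points lam \<subseteq> F \<times> F"
      by (auto simp: torus_curve_points_def F_def)
    ultimately show ?thesis
      by (simp add: sum_subtractf sum.If_cases Int_absorb1 F_def card_nonzero power2_eq_square)
  qed
  finally show ?thesis .
qed

lemma card_affine_curve_points:
  fixes lam :: "'a::{finite,field}"
  assumes "lam \<noteq> 0"
  shows "card {p :: 'a \<times> 'a. snd p ^ 2 + fst p * snd p + snd p = lam * fst p ^ 3}
       = card (torus_curve_points lam) + 2"
proof -
  define C where "C = {p :: 'a \<times> 'a. snd p ^ 2 + fst p * snd p + snd p = lam * fst p ^ 3}"
  have root: "y ^ 2 + y = 0 \<longleftrightarrow> y = 0 \<or> y = -1" for y :: 'a
  proof -
    have "y ^ 2 + y = y * (y + 1)" by (simp add: power2_eq_square algebra_simps)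
    then show ?thesis by (simp add: add_eq_0_iff2)
  qed
  have "{p \<in> C. fst p = 0} = {(0, 0), (0, -1)}"
    by (auto simp: C_def root)
  moreover have "bij_betw (\<lambda>(x, y). (y / x, 1 / x)) {p \<in> C. fst p \<noteq> 0} (torus_curve_points lam)"
    by (rule bij_betwI[where g="\<lambda>(b, c). (1 / c, b / c)"])
      (use assms in \<open>auto simp: C_def torus_curve_points_def field_simps power2_eq_square power3_eq_cube\<close>)
  then have "card {p \<in> C. fst p \<noteq> 0} = card (torus_curve_points lam)"
    by (rule bij_betw_same_card)
  moreover have "C = {p \<in> C. fst p = 0} \<union> {p \<in> C. fst p \<noteq> 0}" by auto
  then have "card C = card {p \<in> C. fst p = 0} + card {p \<in> C. fst p \<noteq> 0}"
    by (metis (no_types, lifting) card_Un_disjoint disjoint_iff finite mem_Collect_eq)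
  ultimately show ?thesis by (simp add: C_def)
qed

lemma three_neq_zero_if_not_dvd_card:
  assumes "\<not> 3 dvd card (UNIV :: 'a::{finite,field} set)"
  shows "(3 :: 'a) \<noteq> 0"
proof
  assume "(3 :: 'a) = 0"
  then have "CHAR('a) dvd 3" using of_nat_eq_0_iff_char_dvd[where 'a='a, of 3] by simp
  then have "CHAR('a) = 3" using prime_nat_iff[of 3] CHAR_not_1' by auto
  then show False using CHAR_dvd_CARD[where 'a='a] assms by simp
qed

lemma card_UNIV_field_ge_2: "card (UNIV :: 'a::{finite,field} set) \<ge> 2"
proof -
  have "card {0 :: 'a, 1} \<le> card (UNIV :: 'a set)" by (rule card_mono) auto
  then show ?thesis by simp
qed

lemma H_q_eq_sum:
  fixes \<psi> \<omega> :: "'a::{finite,field} \<Rightarrow> complex" and t :: 'a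
  defines "q \<equiv> card (UNIV :: 'a set)"
    and "X \<equiv> \<lambda>m::nat. gauss_sum \<psi> \<omega> (3 * int m) * gauss_sum \<psi> \<omega> (- int m) ^ 3 * \<omega> (- t / 27) ^ m"
  shows "(1 - of_nat q) * of_nat q * H_q \<psi> \<omega> t = of_nat (q - 1) * X 0 + (\<Sum>m<q - 1. X m)"
proof -
  have q: "q \<ge> 2" unfolding q_def by (rule card_UNIV_field_ge_2)
  have "(\<Sum>m = 0..int q - 2. of_nat q powi (s_fun q m - 1) * gauss_sum \<psi> \<omega> (3 * m)
          * gauss_sum \<psi> \<omega> (- m) ^ 3 * \<omega> (- t / 27) powi m)
      = (\<Sum>m<q - 1. of_nat q powi (s_fun q (int m) - 1) * X m)"
    by (rule sum.reindex_bij_witness[where i=int and j=nat]) (use q in \<open>auto simp: X_def power_int_nonneg_exp\<close>)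
  also have "\<dots> = (\<Sum>m<q - 1. (if m = 0 then 1 else inverse (of_nat q)) * X m)"
    using q by (intro sum.cong refl) (auto simp: s_fun_def)
  finally have "(1 - of_nat q) * H_q \<psi> \<omega> t = (\<Sum>m<q - 1. (if m = 0 then 1 else inverse (of_nat q)) * X m)"
    using q by (simp add: H_q_def Let_def q_def)
  then have "(1 - of_nat q) * of_nat q * H_q \<psi> \<omega> t
      = of_nat q * (\<Sum>m<q - 1. (if m = 0 then 1 else inverse (of_nat q)) * X m)"
    by (simp add: mult_ac)
  also have "\<dots> = (\<Sum>m<q - 1. X m + (if m = 0 then (of_nat q - 1) * X m else 0))"
    unfolding sum_distrib_left using q by (intro sum.cong refl) (auto simp: algebra_simps)
  also have "\<dots> = of_nat (q - 1) * X 0 + (\<Sum>m<q - 1. X m)"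
    using q by (simp add: sum.distrib of_nat_diff)
  finally show ?thesis .
qed

theorem mainTheorem4:
  fixes lam :: "'a::{finite,field}"
    and \<psi> \<omega> :: "'a \<Rightarrow> complex"
  assumes "\<not> 2 dvd card (UNIV :: 'a set)" and "\<not> 3 dvd card (UNIV :: 'a set)"
    and "lam \<noteq> 0" and "27 * lam \<noteq> 1"
    and "nontrivial_additive_char \<psi>"
    and "char_generator \<omega>"
  shows "of_nat (E_card lam) = of_nat (card (UNIV :: 'a set)) + 1 - H_q \<psi> \<omega> (27 * lam)"
proof -
  define q where "q = card (UNIV :: 'a set)"
  define N where "N = card (torus_curve_points lam)"
  have q: "q \<ge> 2" unfolding q_def by (rule card_UNIV_field_ge_2)
  have "(27 :: 'a) \<noteq> 0"
    using power_not_zero[OF three_neq_zero_if_not_dvd_card[OF assms(2)], of 3] by simp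
  then have "- (27 * lam) / 27 = - lam" by simp
  then have "(1 - of_nat q) * of_nat q * H_q \<psi> \<omega> (27 * lam) = of_nat (q - 1) +
      (\<Sum>m<q - 1. gauss_sum \<psi> \<omega> (3 * int m) * gauss_sum \<psi> \<omega> (- int m) ^ 3 * \<omega> (- lam) ^ m)"
    using H_q_eq_sum[of \<psi> \<omega> "27 * lam"] by (simp add: q_def gauss_sum_0[OF assms(5)])
  also have "\<dots> = (of_nat q - 1) * (1 + of_nat q * of_nat N - (of_nat q - 1) ^ 2)"
    unfolding q_def N_def gauss_moment_sum[OF assms(6,5,3)]
    using q by (simp add: q_def of_nat_diff algebra_simps)
  also have "\<dots> = (1 - of_nat q) * of_nat q * (of_nat q - 2 - of_nat N)"
    by (simp add: power2_eq_square algebra_simps)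
  finally have "H_q \<psi> \<omega> (27 * lam) = of_nat q - 2 - of_nat N"
    using q by simp
  moreover have "E_card lam = N + 3"
    using card_affine_curve_points[OF assms(3)] by (simp add: E_card_def N_def)
  ultimately show ?thesis by (simp add: q_def)
qed

end
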